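(* Let $\mathcal{H}>0$ be a constant such that $\|e^{-t\Delta^2}\varphi\|_{L^q}\leq\mathcal{H}t^{-\frac N4(\frac1p-\frac1q)}\|\varphi\|_{L^p}$ for all $1\leq p\leq q\leq\infty$, $t>0$, $\varphi\in L^p(\mathbb{R}^N)$. Let $N\geq9$ and $q>\frac N4$. Then for every $g\in L^1\cap L^q(\mathbb{R}^N)$, $$\|e^{-t\Delta^2}g\|_{\exp L^2}\leq\kappa(t)\big(\|g\|_{L^1}+\|g\|_{L^q}\big)\quad\text{for all }t>0,$$ where $$\kappa(t)=\frac{2\mathcal{H}}{\sqrt{\log2}}\min\Big\{t^{-\frac{N}{4q}}+1,\ t^{-\frac N4}\big(\log(t^{-\frac N4}+1)\big)^{-1/2}\Big\},$$ and $\kappa\in L^1(0,\infty)$.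
   Context: $e^{-t\Delta^2}$ denotes the biharmonic heat semigroup on $\mathbb{R}^N$: $e^{-t\Delta^2}\varphi=E_t\star\varphi$ with $E_t(x)=(2\pi)^{-N}\int_{\mathbb{R}^N}e^{-t|\xi|^4}e^{ix\cdot\xi}\,d\xi$. The Orlicz space $\exp L^2(\mathbb{R}^N)$ is the set of $u\in L^1_{loc}(\mathbb{R}^N)$ such that $\int_{\mathbb{R}^N}(e^{|u(x)|^2/\alpha^2}-1)\,dx<\infty$ for some $\alpha>0$, with the Luxemburg norm $\|u\|_{\exp L^2}=\inf\{\alpha>0:\int_{\mathbb{R}^N}(e^{|u(x)|^2/\alpha^2}-1)\,dx\leq 1\}$. *)

theory Defs
  imports "HOL-Analysis.Analysis"
begin

definition biharm_kernel :: "real \<Rightarrow> 'a::euclidean_space \<Rightarrow> complex" where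
  "biharm_kernel t x =
     complex_of_real ((2 * pi) powr (- real DIM('a))) *
     (\<integral> \<xi>. complex_of_real (exp (- t * norm \<xi> ^ 4)) * cis (x \<bullet> \<xi>) \<partial>lebesgue)"

definition biharm_heat :: "real \<Rightarrow> ('a::euclidean_space \<Rightarrow> real) \<Rightarrow> 'a \<Rightarrow> complex" where
  "biharm_heat t \<phi> x = (\<integral> y. biharm_kernel t (x - y) * complex_of_real (\<phi> y) \<partial>lebesgue)"

definition Lp_norm :: "ereal \<Rightarrow> ('a::euclidean_space \<Rightarrow> 'b::real_normed_vector) \<Rightarrow> ennreal" where
  "Lp_norm p f =
     (if p = \<infinity> then Inf {C. AE x in lebesgue. ennreal (norm (f x)) \<le> C}
      else (let I = (\<integral>\<^sup>+ x. ennreal (norm (f x) powr real_of_ereal p) \<partial>lebesgue)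
            in if I = \<infinity> then \<infinity> else ennreal (enn2real I powr (1 / real_of_ereal p))))"

definition in_Lp :: "ereal \<Rightarrow> ('a::euclidean_space \<Rightarrow> 'b::real_normed_vector) \<Rightarrow> bool" where
  "in_Lp p f \<longleftrightarrow> f \<in> borel_measurable lebesgue \<and> Lp_norm p f < \<infinity>"

definition inv_exp :: "ereal \<Rightarrow> real" where
  "inv_exp p = (if p = \<infinity> then 0 else 1 / real_of_ereal p)"

text \<open>Luxemburg norm of exp L^2 (value \<infinity> if no admissible alpha exists).\<close>
definition expL2_norm :: "('a::euclidean_space \<Rightarrow> 'b::real_normed_vector) \<Rightarrow> ennreal" where
  "expL2_norm u = Inf {ennreal \<alpha> | \<alpha>. \<alpha> > 0 \<and>
      (\<integral>\<^sup>+ x. ennreal (exp (norm (u x) ^ 2 / \<alpha> ^ 2) - 1) \<partial>lebesgue) \<le> 1}"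

definition kappa :: "real \<Rightarrow> real \<Rightarrow> real \<Rightarrow> real \<Rightarrow> real" where
  "kappa H N q t = 2 * H / sqrt (ln 2) *
     min (t powr (- N / (4 * q)) + 1)
         (t powr (- N / 4) * (ln (t powr (- N / 4) + 1)) powr (- 1 / 2))"

end

theory Submission
  imports Defs
begin

text \<open>Put a = \<parallel>g\<parallel>_1, b = \<parallel>g\<parallel>_q and u = e^(-t\<Delta>^2) g. The semigroup estimate gives
  \<parallel>u\<parallel>_1 \<le> H a together with the two sup bounds \<parallel>u\<parallel>_\<infinity> \<le> H t^(-N/4) a and
  \<parallel>u\<parallel>_\<infinity> \<le> H t^(-N/(4q)) b. If |u| \<le> M a.e. and \<parallel>u\<parallel>_1 \<le> L, convexity of
  s \<mapsto> exp (s^2/\<alpha>^2) on [0, M] bounds exp (|u|^2/\<alpha>^2) - 1 by its chord, so the Orlicz integral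
  is at most L (exp (M^2/\<alpha>^2) - 1) / M, and \<parallel>u\<parallel>_(exp L^2) \<le> \<alpha> once this is \<le> 1. Each sup bound
  yields one branch of the minimum defining \<kappa>. Finally \<kappa>(t) = O(t^(-N/(4q))) near 0 with
  N/(4q) < 1 and \<kappa>(t) = O(t^(-N/8)) near \<infinity> with N/8 > 1, hence \<kappa> is integrable.\<close>

lemma ln_one_plus_lower_bound:
  assumes "0 \<le> (x::real)"
  shows "x / (1 + x) \<le> ln (1 + x)"
proof -
  have "- ln (1 + x) = ln (1 / (1 + x))"
    using assms by (simp add: ln_div)
  also have "\<dots> \<le> 1 / (1 + x) - 1"
    using assms by (intro ln_le_minus_one) auto
  also have "\<dots> = - (x / (1 + x))"
    using assms by (simp add: field_simps)
  finally show ?thesis by simp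
qed

lemma mult_ln_add_one_powr_le:
  assumes "0 < T" "T \<le> 1"
  shows "T * ln (T + 1) powr (- 1 / 2) \<le> sqrt 2 * sqrt T"
proof -
  have "T / 2 \<le> T / (1 + T)"
    using assms by (intro divide_left_mono) auto
  also have "\<dots> \<le> ln (T + 1)"
    using ln_one_plus_lower_bound[of T] assms by (simp add: add.commute)
  finally have "ln (T + 1) powr (- 1 / 2) \<le> (T / 2) powr (- 1 / 2)"
    using assms by (intro powr_mono2') auto
  also have "(T / 2) powr (- 1 / 2) = 1 / sqrt (T / 2)"
    using assms by (simp add: powr_minus_divide powr_half_sqrt[symmetric] powr_minus)
  also have "\<dots> = sqrt 2 / sqrt T"
    by (simp add: real_sqrt_divide)
  finally have "T * ln (T + 1) powr (- 1 / 2) \<le> T * (sqrt 2 / sqrt T)"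
    using assms by (intro mult_left_mono) auto
  also have "T * (sqrt 2 / sqrt T) = sqrt 2 * (T / sqrt T)"
    by simp
  also have "T / sqrt T = sqrt T"
    using assms by (simp add: real_div_sqrt)
  finally show ?thesis .
qed

lemma kappa_nonneg: "0 \<le> H \<Longrightarrow> 0 \<le> kappa H N q t"
  unfolding kappa_def by (intro mult_nonneg_nonneg divide_nonneg_nonneg) (auto simp: min_def)

lemma kappa_le_near_zero:
  assumes "0 \<le> H" "0 < t" "t \<le> 1" "0 \<le> N" "0 < q"
  shows "kappa H N q t \<le> 4 * H / sqrt (ln 2) * t powr (- N / (4 * q))"
proof -
  have "t powr 0 \<le> t powr (- N / (4 * q))"
    using assms by (intro powr_mono') (auto simp: divide_nonpos_pos)
  then have "t powr (- N / (4 * q)) + 1 \<le> 2 * t powr (- N / (4 * q))"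
    using assms by simp
  then have "kappa H N q t \<le> 2 * H / sqrt (ln 2) * (2 * t powr (- N / (4 * q)))"
    unfolding kappa_def using assms by (intro mult_left_mono) auto
  then show ?thesis by simp
qed

lemma kappa_le_at_infinity:
  assumes "0 \<le> H" "1 \<le> t" "0 \<le> N"
  shows "kappa H N q t \<le> 2 * sqrt 2 * H / sqrt (ln 2) * t powr (- N / 8)"
proof -
  define T where "T = t powr (- N / 4)"
  have "T \<le> t powr 0"
    unfolding T_def using assms by (intro powr_mono) auto
  then have T: "0 < T" "T \<le> 1"
    using assms by (auto simp: T_def)
  have "sqrt T = T powr (1 / 2)"
    using T by (simp add: powr_half_sqrt)
  also have "\<dots> = t powr (- N / 8)"
    by (simp add: T_def powr_powr)
  finally have "sqrt T = t powr (- N / 8)" .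
  then have "T * ln (T + 1) powr (- 1 / 2) \<le> sqrt 2 * t powr (- N / 8)"
    using mult_ln_add_one_powr_le[OF T] by simp
  then have "kappa H N q t \<le> 2 * H / sqrt (ln 2) * (sqrt 2 * t powr (- N / 8))"
    unfolding kappa_def T_def[symmetric] using assms by (intro mult_left_mono) (auto simp: min_def)
  then show ?thesis by (simp add: mult_ac)
qed

lemma set_integrable_lborel_bound:
  fixes f g :: "real \<Rightarrow> real"
  assumes f: "f \<in> borel_measurable borel" and g: "g \<in> borel_measurable borel"
    and A: "A \<in> sets borel" and g_int: "g integrable_on A"
    and le: "\<And>t. t \<in> A \<Longrightarrow> \<bar>f t\<bar> \<le> g t"
  shows "set_integrable lborel A f"
proof (rule set_integrable_bound)
  have g_nonneg: "0 \<le> g t" if "t \<in> A" for t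
    using le[OF that] by (meson abs_ge_zero order_trans)
  have "g absolutely_integrable_on A"
    using g_int g_nonneg by (simp add: absolutely_integrable_on_iff_nonneg)
  moreover have "(\<lambda>t. indicat_real A t *\<^sub>R g t) \<in> borel_measurable lborel"
    using g A by measurable
  ultimately show "set_integrable lborel A g"
    unfolding set_integrable_def by (simp add: integrable_completion)
  show "set_borel_measurable lborel A f"
    unfolding set_borel_measurable_def using f A by measurable
  show "AE t in lborel. t \<in> A \<longrightarrow> norm (f t) \<le> norm (g t)"
  proof (intro AE_I2 impI)
    fix t assume "t \<in> A"
    then show "norm (f t) \<le> norm (g t)"
      using le[of t] by (metis abs_ge_self order_trans real_norm_def)
  qed
qed

lemma kappa_integrable:
  assumes H: "0 \<le> H" and N: "8 < N" and q: "N / 4 < q"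
  shows "set_integrable lborel {0<..} (kappa H N q)"
proof -
  have kappa_meas: "kappa H N q \<in> borel_measurable borel"
    unfolding kappa_def by measurable
  have "set_integrable lborel {0<..1} (kappa H N q)"
  proof (rule set_integrable_lborel_bound[OF kappa_meas])
    have e: "- N / (4 * q) > -1" using N q by (simp add: field_simps)
    show "(\<lambda>t. 4 * H / sqrt (ln 2) * t powr (- N / (4 * q))) integrable_on {0<..1}"
      using integrable_on_cmult_left[OF integrable_on_powr_from_0'[OF e, of 1]] by simp
    show "\<bar>kappa H N q t\<bar> \<le> 4 * H / sqrt (ln 2) * t powr (- N / (4 * q))" if "t \<in> {0<..1}" for t
      using that kappa_le_near_zero[OF H, of t N q] kappa_nonneg[OF H] N q by auto
  qed auto
  moreover have "set_integrable lborel {1..} (kappa H N q)"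
  proof (rule set_integrable_lborel_bound[OF kappa_meas])
    have powr_int: "(\<lambda>t. t powr (- N / 8)) integrable_on {1..}"
      using has_integral_powr_to_inf[of "- N / 8" 1] N by (auto simp: integrable_on_def)
    show "(\<lambda>t. 2 * sqrt 2 * H / sqrt (ln 2) * t powr (- N / 8)) integrable_on {1..}"
      using integrable_on_cmult_left[OF powr_int] by simp
    show "\<bar>kappa H N q t\<bar> \<le> 2 * sqrt 2 * H / sqrt (ln 2) * t powr (- N / 8)" if "t \<in> {1..}" for t
      using that kappa_le_at_infinity[OF H, of t N q] kappa_nonneg[OF H] N by auto
  qed auto
  ultimately have "set_integrable lborel ({0<..1} \<union> {1..}) (kappa H N q)"
    by (rule set_integrable_Un) auto
  moreover have "{0<..1} \<union> {1..} = {0::real<..}" by auto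
  ultimately show ?thesis by simp
qed

lemma AE_le_Inf_AE_bounds:
  fixes f :: "'a \<Rightarrow> ennreal"
  shows "AE x in M. f x \<le> Inf {C. AE x in M. f x \<le> C}"
proof -
  let ?S = "{C. AE x in M. f x \<le> C}"
  have "top \<in> ?S" by simp
  then obtain C :: "nat \<Rightarrow> ennreal" where C: "range C \<subseteq> ?S" "Inf ?S = (INF i. C i)"
    using ennreal_Inf_countable_INF[of ?S] by blast
  have "AE x in M. \<forall>i. f x \<le> C i"
    using C(1) by (auto simp: AE_all_countable)
  then show ?thesis
    by eventually_elim (simp add: C(2) le_INF_iff)
qed

lemma AE_norm_le_Lp_norm_infinity: "AE x in lebesgue. ennreal (norm (f x)) \<le> Lp_norm \<infinity> f"
  unfolding Lp_norm_def by (simp add: AE_le_Inf_AE_bounds)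

lemma AE_norm_le_of_Lp_norm_infinity_le:
  assumes "Lp_norm \<infinity> f \<le> ennreal M" "0 \<le> M"
  shows "AE x in lebesgue. norm (f x) \<le> M"
  using AE_norm_le_Lp_norm_infinity[of f]
  by eventually_elim (use assms in \<open>auto dest: order_trans simp: ennreal_le_iff\<close>)

lemma Lp_norm_one: "Lp_norm 1 f = (\<integral>\<^sup>+x. ennreal (norm (f x)) \<partial>lebesgue)"
  unfolding Lp_norm_def Let_def by (auto simp: ennreal_enn2real_if)

text \<open>Unlike \<open>nn_integral_cmult\<close>, no measurability of \<open>f\<close> is needed (none is known for
  \<open>biharm_heat t g\<close>): dividing a simple minorant of \<open>c * f\<close> by \<open>c\<close> gives one of \<open>f\<close>.\<close>
lemma nn_integral_cmult_le:
  assumes "0 \<le> c"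
  shows "(\<integral>\<^sup>+x. ennreal c * f x \<partial>M) \<le> ennreal c * integral\<^sup>N M f"
proof (cases "c = 0")
  case False
  with assms have c: "0 < c" by simp
  have inv: "ennreal (1 / c) * ennreal c = 1"
    using c by (simp flip: ennreal_mult)
  show ?thesis
    unfolding nn_integral_def
  proof (rule SUP_least)
    fix g assume g: "g \<in> {g. simple_function M g \<and> g \<le> (\<lambda>x. ennreal c * f x)}"
    define g' where "g' x = ennreal (1 / c) * g x" for x
    have g'_simple: "simple_function M g'"
      unfolding g'_def using g by (intro simple_function_compose1[where g = "\<lambda>y. ennreal (1 / c) * y"]) auto
    have "g' x \<le> f x" for x
    proof -
      have "g' x \<le> ennreal (1 / c) * (ennreal c * f x)"
        unfolding g'_def using g by (intro mult_left_mono) (auto simp: le_fun_def)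
      then show ?thesis by (simp add: mult.assoc[symmetric] inv)
    qed
    moreover have "g = (\<lambda>x. ennreal c * g' x)"
      by (simp add: g'_def mult.assoc[symmetric] inv mult.commute[of "ennreal c"])
    then have "integral\<^sup>S M g = ennreal c * integral\<^sup>S M g'"
      using g'_simple by simp
    ultimately show "integral\<^sup>S M g \<le> ennreal c * (SUP g \<in> {g. simple_function M g \<and> g \<le> f}. integral\<^sup>S M g)"
      using g'_simple by (auto intro!: mult_left_mono SUP_upper simp: le_fun_def)
  qed
qed simp

lemma exp_square_minus_one_le_chord:
  fixes y M \<alpha> :: real
  assumes "0 \<le> y" "y \<le> M" "0 < M"
  shows "exp (y ^ 2 / \<alpha> ^ 2) - 1 \<le> (exp (M ^ 2 / \<alpha> ^ 2) - 1) / M * y"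
proof -
  define l where "l = y / M"
  define z where "z = M ^ 2 / \<alpha> ^ 2"
  have l: "0 \<le> l" "l \<le> 1"
    using assms by (auto simp: l_def field_simps)
  have "y ^ 2 / \<alpha> ^ 2 = l ^ 2 * z"
    using assms by (simp add: l_def z_def field_simps)
  also have "\<dots> \<le> l * z"
    using l by (intro mult_right_mono) (auto simp: z_def power2_eq_square mult_left_le_one_le)
  finally have "exp (y ^ 2 / \<alpha> ^ 2) \<le> exp ((1 - l) *\<^sub>R 0 + l *\<^sub>R z)"
    by simp
  also have "\<dots> \<le> (1 - l) * exp 0 + l * exp z"
    using l by (intro convex_onD[OF exp_convex]) auto
  finally have "exp (y ^ 2 / \<alpha> ^ 2) - 1 \<le> l * (exp z - 1)"
    by (simp add: algebra_simps)
  then show ?thesis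
    using assms by (simp add: l_def z_def field_simps)
qed

lemma expL2_norm_le_of_bounds:
  fixes u :: "'a::euclidean_space \<Rightarrow> 'b::real_normed_vector"
  assumes M: "0 < M" and bound: "AE x in lebesgue. norm (u x) \<le> M"
    and L1: "(\<integral>\<^sup>+x. ennreal (norm (u x)) \<partial>lebesgue) \<le> ennreal L" and L: "0 \<le> L"
    and \<alpha>: "0 < \<alpha>" and cond: "L * (exp (M ^ 2 / \<alpha> ^ 2) - 1) \<le> M"
  shows "expL2_norm u \<le> ennreal \<alpha>"
proof -
  define C where "C = (exp (M ^ 2 / \<alpha> ^ 2) - 1) / M"
  have C: "0 \<le> C"
    unfolding C_def using M by simp
  have "(\<integral>\<^sup>+x. ennreal (exp (norm (u x) ^ 2 / \<alpha> ^ 2) - 1) \<partial>lebesgue)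
      \<le> (\<integral>\<^sup>+x. ennreal C * ennreal (norm (u x)) \<partial>lebesgue)"
    using bound
  proof (intro nn_integral_mono_AE, eventually_elim)
    case (elim x)
    then have "exp (norm (u x) ^ 2 / \<alpha> ^ 2) - 1 \<le> C * norm (u x)"
      unfolding C_def using exp_square_minus_one_le_chord[of "norm (u x)" M \<alpha>] M by simp
    then show ?case
      using C by (simp add: ennreal_mult[symmetric] ennreal_leI)
  qed
  also have "\<dots> \<le> ennreal C * (\<integral>\<^sup>+x. ennreal (norm (u x)) \<partial>lebesgue)"
    using C by (rule nn_integral_cmult_le)
  also have "\<dots> \<le> ennreal C * ennreal L"
    using L1 by (rule mult_left_mono) simp
  also have "\<dots> = ennreal (C * L)"
    using C L by (simp add: ennreal_mult)
  also have "\<dots> \<le> 1"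
  proof -
    have "C * L = L * (exp (M ^ 2 / \<alpha> ^ 2) - 1) / M"
      unfolding C_def by simp
    also have "\<dots> \<le> 1"
      using cond M by (simp add: divide_le_eq)
    finally show ?thesis
      by (simp add: ennreal_le_1)
  qed
  finally have I: "(\<integral>\<^sup>+x. ennreal (exp (norm (u x) ^ 2 / \<alpha> ^ 2) - 1) \<partial>lebesgue) \<le> 1" .
  show ?thesis
    unfolding expL2_norm_def by (rule Inf_lower) (use \<alpha> I in blast)
qed

lemma expL2_norm_eq_0_if_AE_zero:
  fixes u :: "'a::euclidean_space \<Rightarrow> 'b::real_normed_vector"
  assumes "AE x in lebesgue. u x = 0"
  shows "expL2_norm u = 0"
proof -
  have "expL2_norm u \<le> 0 + ennreal e" if e: "0 < e" for e
  proof -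
    have "AE x in lebesgue. ennreal (exp (norm (u x) ^ 2 / e ^ 2) - 1) = 0"
      using assms by (auto elim!: eventually_mono)
    from nn_integral_cong_AE[OF this]
    have I: "(\<integral>\<^sup>+x. ennreal (exp (norm (u x) ^ 2 / e ^ 2) - 1) \<partial>lebesgue) \<le> 1"
      by simp
    have "expL2_norm u \<le> ennreal e"
      unfolding expL2_norm_def by (rule Inf_lower) (use e I in blast)
    then show ?thesis by simp
  qed
  then have "expL2_norm u \<le> 0"
    by (rule ennreal_le_epsilon)
  then show ?thesis by simp
qed

lemma exp_minus_one_le_two_mult:
  fixes x :: real
  assumes "0 \<le> x" "x \<le> ln 2"
  shows "exp x - 1 \<le> 2 * x"
proof -
  have "exp x * (1 - x) \<le> exp x * exp (- x)"
    using exp_ge_add_one_self[of "- x"] by (intro mult_left_mono) auto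
  then have "exp x - 1 \<le> x * exp x"
    by (simp add: exp_minus algebra_simps)
  also have "\<dots> \<le> x * 2"
    using assms exp_le_cancel_iff[of x "ln 2"] by (intro mult_left_mono) auto
  finally show ?thesis by simp
qed

lemma expL2_norm_le_linear_bound:
  fixes u :: "'a::euclidean_space \<Rightarrow> 'b::real_normed_vector"
  assumes H: "0 < H" and a: "0 \<le> a" and b: "0 \<le> b" and S: "0 < S"
    and bound: "AE x in lebesgue. norm (u x) \<le> H * S * b"
    and L1: "(\<integral>\<^sup>+x. ennreal (norm (u x)) \<partial>lebesgue) \<le> ennreal (H * a)"
  shows "expL2_norm u \<le> ennreal (2 * H / sqrt (ln 2) * (S + 1) * (a + b))"
proof (cases "b = 0")
  case True
  then show ?thesis
    using bound expL2_norm_eq_0_if_AE_zero[of u] by (auto elim!: eventually_mono)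
next
  case False
  with b have b: "0 < b" by simp
  define M where "M = H * S * b"
  define \<alpha> where "\<alpha> = 2 * H / sqrt (ln 2) * (S + 1) * (a + b)"
  define r where "r = S * b / ((S + 1) * (a + b))"
  have M: "0 < M" and \<alpha>: "0 < \<alpha>"
    using H S a b by (simp_all add: M_def \<alpha>_def)
  have "S * b \<le> (S + 1) * (a + b)"
    using S a b by (intro mult_mono) auto
  then have r: "0 \<le> r" "r \<le> 1"
    using S a b by (simp_all add: r_def)
  have ln2: "0 < ln (2::real)" "ln (2::real) \<le> 1"
    using ln_le_minus_one[of 2] by auto
  have root_ratio: "M / \<alpha> = sqrt (ln 2) / 2 * r"
  proof -
    define D where "D = (S + 1) * (a + b)"
    have "0 < D" using S a b by (simp add: D_def)
    then show ?thesis
      using H unfolding M_def \<alpha>_def r_def mult.assoc[of _ "S + 1"] D_def[symmetric]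
      by (simp add: field_simps)
  qed
  have "M ^ 2 / \<alpha> ^ 2 = (sqrt (ln 2) / 2 * r) ^ 2"
    by (simp only: power_divide[symmetric] root_ratio)
  then have ratio: "M ^ 2 / \<alpha> ^ 2 = ln 2 / 4 * r ^ 2"
    using ln2 by (simp add: power_mult_distrib power_divide)
  have "exp (M ^ 2 / \<alpha> ^ 2) - 1 \<le> 2 * (ln 2 / 4 * r ^ 2)"
    unfolding ratio using ln2 r power_le_one[of r 2] by (intro exp_minus_one_le_two_mult) auto
  also have "\<dots> \<le> r"
  proof -
    have "r * ln 2 \<le> 2"
      using ln2 r mult_le_one[of r "ln 2"] by linarith
    then have "r * (r * ln 2) \<le> r * 2"
      using r by (intro mult_left_mono) auto
    then show ?thesis by (simp add: power2_eq_square)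
  qed
  finally have "H * a * (exp (M ^ 2 / \<alpha> ^ 2) - 1) \<le> H * (a * r)"
    using H a by (simp add: mult_left_mono)
  also have "a * r \<le> S * b"
  proof -
    have "0 \<le> S * (a + b)"
      using S a b by simp
    then have "a \<le> (S + 1) * (a + b)"
      using b by (simp add: algebra_simps)
    then have "a / ((S + 1) * (a + b)) \<le> 1"
      using S a b by (simp add: divide_le_eq_1)
    then have "S * b * (a / ((S + 1) * (a + b))) \<le> S * b"
      using S b by (intro mult_left_le) auto
    then show ?thesis by (simp add: r_def mult.commute)
  qed
  finally show ?thesis
    using expL2_norm_le_of_bounds[OF M _ L1 _ \<alpha>] bound H a by (simp add: M_def \<alpha>_def mult.assoc)
qed

lemma expL2_norm_le_log_bound:
  fixes u :: "'a::euclidean_space \<Rightarrow> 'b::real_normed_vector"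
  assumes H: "0 < H" and a: "0 \<le> a" and b: "0 \<le> b" and T: "0 < T"
    and bound: "AE x in lebesgue. norm (u x) \<le> H * T * a"
    and L1: "(\<integral>\<^sup>+x. ennreal (norm (u x)) \<partial>lebesgue) \<le> ennreal (H * a)"
  shows "expL2_norm u \<le> ennreal (2 * H / sqrt (ln 2) * (T * ln (T + 1) powr (- 1 / 2)) * (a + b))"
proof (cases "a = 0")
  case True
  then show ?thesis
    using bound expL2_norm_eq_0_if_AE_zero[of u] by (auto elim!: eventually_mono)
next
  case False
  with a have a: "0 < a" by simp
  define l where "l = ln (T + 1)"
  define M where "M = H * T * a"
  define \<alpha> where "\<alpha> = 2 * H / sqrt (ln 2) * (T * l powr (- 1 / 2)) * (a + b)"
  define \<rho> where "\<rho> = a / (a + b)"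
  have l: "0 < l"
    unfolding l_def using T by simp
  have M: "0 < M" and \<alpha>: "0 < \<alpha>"
    using H T a b l by (simp_all add: M_def \<alpha>_def)
  have ln2: "0 < ln (2::real)" "ln (2::real) \<le> 1"
    using ln_le_minus_one[of 2] by auto
  have root_ratio: "M / \<alpha> = sqrt (ln 2) / 2 * sqrt l * \<rho>"
  proof -
    define D where "D = a + b"
    have "0 < D" using a b by (simp add: D_def)
    moreover have "l powr (- 1 / 2) = 1 / sqrt l"
      using l by (simp add: powr_minus_divide powr_half_sqrt[symmetric] powr_minus)
    ultimately show ?thesis
      using H T l unfolding M_def \<alpha>_def \<rho>_def D_def[symmetric] by (simp add: field_simps)
  qed
  have "M ^ 2 / \<alpha> ^ 2 = (sqrt (ln 2) / 2 * sqrt l * \<rho>) ^ 2"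
    by (simp only: power_divide[symmetric] root_ratio)
  then have "M ^ 2 / \<alpha> ^ 2 = ln 2 / 4 * l * \<rho> ^ 2"
    using ln2 l by (simp add: power_mult_distrib power_divide)
  also have "\<dots> \<le> l"
  proof -
    have "\<rho> ^ 2 \<le> 1"
      using a b by (simp add: \<rho>_def power_le_one)
    then have "ln 2 / 4 * \<rho> ^ 2 \<le> 1"
      using ln2 mult_le_one[of "ln 2 / 4" "\<rho> ^ 2"] by simp
    then show ?thesis
      using l mult_left_le[of "ln 2 / 4 * \<rho> ^ 2" l] by (simp add: mult_ac)
  qed
  finally have "exp (M ^ 2 / \<alpha> ^ 2) \<le> exp l"
    by simp
  then have "exp (M ^ 2 / \<alpha> ^ 2) - 1 \<le> T"
    using T by (simp add: l_def)
  then have "H * a * (exp (M ^ 2 / \<alpha> ^ 2) - 1) \<le> M"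
    using H a by (simp add: M_def mult_left_mono mult.commute[of _ T] mult.assoc)
  then show ?thesis
    using expL2_norm_le_of_bounds[OF M _ L1 _ \<alpha>] bound H a by (simp add: M_def \<alpha>_def l_def)
qed

theorem corollary3p5:
  fixes H :: real and q :: real and g :: "'a::euclidean_space \<Rightarrow> real"
  assumes H_pos: "H > 0"
    and H_est: "\<And>p r t (\<phi> :: 'a \<Rightarrow> real).
        1 \<le> p \<Longrightarrow> p \<le> r \<Longrightarrow> t > 0 \<Longrightarrow> in_Lp p \<phi> \<Longrightarrow>
        Lp_norm r (biharm_heat t \<phi>)
          \<le> ennreal (H * t powr (- real DIM('a) / 4 * (inv_exp p - inv_exp r))) * Lp_norm p \<phi>"
    and N: "DIM('a) \<ge> 9"
    and q: "q > real DIM('a) / 4"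
    and g1: "in_Lp 1 g" and gq: "in_Lp (ereal q) g"
  shows "(\<forall>t>0. expL2_norm (biharm_heat t g)
            \<le> ennreal (kappa H (real DIM('a)) q t) * (Lp_norm 1 g + Lp_norm (ereal q) g))
         \<and> set_integrable lborel {0<..} (kappa H (real DIM('a)) q)"
proof
  let ?N = "real DIM('a)"
  have q1: "1 < q"
    using N q by simp
  show "set_integrable lborel {0<..} (kappa H ?N q)"
    using kappa_integrable[of H ?N q] H_pos N q by simp
  obtain a where a: "Lp_norm 1 g = ennreal a" "0 \<le> a"
    using g1 unfolding in_Lp_def by (cases "Lp_norm 1 g" rule: ennreal_cases) auto
  obtain b where b: "Lp_norm (ereal q) g = ennreal b" "0 \<le> b"
    using gq unfolding in_Lp_def by (cases "Lp_norm (ereal q) g" rule: ennreal_cases) auto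
  show "\<forall>t>0. expL2_norm (biharm_heat t g) \<le> ennreal (kappa H ?N q t) * (Lp_norm 1 g + Lp_norm (ereal q) g)"
  proof (intro allI impI)
    fix t :: real assume t: "0 < t"
    let ?u = "biharm_heat t g"
    have L1: "(\<integral>\<^sup>+x. ennreal (norm (?u x)) \<partial>lebesgue) \<le> ennreal (H * a)"
      using H_est[of 1 1 t g] t g1 a H_pos by (simp add: Lp_norm_one ennreal_mult)
    have "AE x in lebesgue. norm (?u x) \<le> H * t powr (- ?N / 4) * a"
      using H_est[of 1 \<infinity> t g] t g1 a H_pos
      by (intro AE_norm_le_of_Lp_norm_infinity_le) (simp_all add: inv_exp_def ennreal_mult)
    with L1 have bound_log: "expL2_norm ?u \<le> ennreal (2 * H / sqrt (ln 2)
        * (t powr (- ?N / 4) * ln (t powr (- ?N / 4) + 1) powr (- 1 / 2)) * (a + b))"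
      using H_pos a b t by (intro expL2_norm_le_log_bound) auto
    have "AE x in lebesgue. norm (?u x) \<le> H * t powr (- ?N / (4 * q)) * b"
      using H_est[of "ereal q" \<infinity> t g] t gq b H_pos q1
      by (intro AE_norm_le_of_Lp_norm_infinity_le) (simp_all add: inv_exp_def ennreal_mult)
    with L1 have bound_linear: "expL2_norm ?u \<le> ennreal (2 * H / sqrt (ln 2)
        * (t powr (- ?N / (4 * q)) + 1) * (a + b))"
      using H_pos a b t by (intro expL2_norm_le_linear_bound) auto
    have "expL2_norm ?u \<le> ennreal (kappa H ?N q t * (a + b))"
      using bound_log bound_linear unfolding kappa_def min_def by (simp add: mult.assoc)
    then show "expL2_norm ?u \<le> ennreal (kappa H ?N q t) * (Lp_norm 1 g + Lp_norm (ereal q) g)"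
      using a b kappa_nonneg[of H ?N q t] H_pos by (simp add: ennreal_mult ennreal_plus[symmetric] del: ennreal_plus)
  qed
qed

end
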